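(* Let $G$ be a finite simple unmixed graph and suppose the graph $\mathcal{G}=\mathcal{G}_{I_c(G)}$ is a tree. Then $I_c(G)$ is linearly presented if and only if for every path $\{C_1,\ldots,C_n\}$ of $\mathcal{G}$ one has $\alpha_0(G)\ge n-1$ and $\left|\bigcap_{j=1}^n C_j\right|=\alpha_0(G)-(n-1)$.
   Context: $G$ has vertices $t_1,\ldots,t_s$; $S=K[t_1,\ldots,t_s]$, $K$ a field. $G$ is unmixed if all minimal vertex covers (inclusion-minimal vertex sets meeting every edge) have the same size $\alpha_0(G)$. $I_c(G)$ is generated by $\prod_{t_i\in C}t_i$ over minimal vertex covers $C$. The graph $\mathcal{G}$ has the minimal vertex covers as vertices, with $\{C_i,C_j\}$ ($i\ne j$) an edge iff $|C_i\cup C_j|=|C_i|+1$. A path $\{C_1,\ldots,C_n\}$ is a sequence of distinct vertices with $\{C_i,C_{i+1}\}$ an edge for all $i$. A monomial ideal minimally generated by $u_1,\dots,u_r$ is linearly presented if all $u_i$ have the same degree and the kernel of $S^r\to S$, $e_i\mapsto u_i$, is generated by vectors with linear-form entries. *)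

theory Defs
  imports Main "HOL-Library.Poly_Mapping"
begin

type_synonym ('a, 'k) mpoly = "('a \<Rightarrow>\<^sub>0 nat) \<Rightarrow>\<^sub>0 'k"

definition Var :: "'a \<Rightarrow> ('a, 'k::comm_ring_1) mpoly" where
  "Var x = Poly_Mapping.single (Poly_Mapping.single x 1) 1"

definition mdeg :: "('a \<Rightarrow>\<^sub>0 nat) \<Rightarrow> nat" where
  "mdeg m = (\<Sum>x\<in>Poly_Mapping.keys m. Poly_Mapping.lookup m x)"

definition homogeneous_of_degree :: "nat \<Rightarrow> ('a, 'k::zero) mpoly \<Rightarrow> bool" where
  "homogeneous_of_degree d p \<longleftrightarrow> (\<forall>m\<in>Poly_Mapping.keys p. mdeg m = d)"

definition linear_form :: "('a, 'k::zero) mpoly \<Rightarrow> bool" where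
  "linear_form p \<longleftrightarrow> homogeneous_of_degree 1 p"

text \<open>Kernel of S^I \<rightarrow> S, e_i \<mapsto> u_i (vectors = functions on I, zero outside I).\<close>
definition syzygies :: "'i set \<Rightarrow> ('i \<Rightarrow> ('a,'k::comm_ring_1) mpoly) \<Rightarrow> ('i \<Rightarrow> ('a,'k) mpoly) set" where
  "syzygies I u = {v. (\<forall>i. i \<notin> I \<longrightarrow> v i = 0) \<and> (\<Sum>i\<in>I. v i * u i) = 0}"

definition module_span :: "('i \<Rightarrow> ('a,'k::comm_ring_1) mpoly) set \<Rightarrow> ('i \<Rightarrow> ('a,'k) mpoly) set" where
  "module_span L = {v. \<exists>F c. finite F \<and> F \<subseteq> L \<and> v = (\<lambda>i. \<Sum>g\<in>F. c g * g i)}"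

text \<open>Linear presentation of the monomial ideal minimally generated by the family u_i, i in I.\<close>
definition linearly_presented :: "'i set \<Rightarrow> ('i \<Rightarrow> ('a,'k::comm_ring_1) mpoly) \<Rightarrow> bool" where
  "linearly_presented I u \<longleftrightarrow>
     (\<exists>d. \<forall>i\<in>I. homogeneous_of_degree d (u i)) \<and>
     syzygies I u = module_span {v \<in> syzygies I u. \<forall>i. linear_form (v i)}"

definition simple_graph :: "'a set set \<Rightarrow> bool" where
  "simple_graph E \<longleftrightarrow> (\<forall>e\<in>E. card e = 2)"

definition vertex_cover :: "'a set set \<Rightarrow> 'a set \<Rightarrow> bool" where
  "vertex_cover E C \<longleftrightarrow> (\<forall>e\<in>E. e \<inter> C \<noteq> {})"

definition min_covers :: "'a set set \<Rightarrow> 'a set set" where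
  "min_covers E = {C. vertex_cover E C \<and> (\<forall>D. D \<subset> C \<longrightarrow> \<not> vertex_cover E D)}"

definition unmixed :: "'a set set \<Rightarrow> bool" where
  "unmixed E \<longleftrightarrow> (\<forall>C\<in>min_covers E. \<forall>D\<in>min_covers E. card C = card D)"

definition alpha0 :: "'a set set \<Rightarrow> nat" where
  "alpha0 E = Min (card ` {C. vertex_cover E C})"

definition cover_monomial :: "'a set \<Rightarrow> ('a,'k::comm_ring_1) mpoly" where
  "cover_monomial C = (\<Prod>x\<in>C. Var x)"

definition cover_adj :: "'a set \<Rightarrow> 'a set \<Rightarrow> bool" where
  "cover_adj C D \<longleftrightarrow> C \<noteq> D \<and> card (C \<union> D) = card C + 1"

definition is_path :: "'v set \<Rightarrow> ('v \<Rightarrow> 'v \<Rightarrow> bool) \<Rightarrow> 'v list \<Rightarrow> bool" where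
  "is_path V adj ps \<longleftrightarrow> ps \<noteq> [] \<and> distinct ps \<and> set ps \<subseteq> V \<and>
     (\<forall>i. Suc i < length ps \<longrightarrow> adj (ps ! i) (ps ! Suc i))"

definition connected_graph :: "'v set \<Rightarrow> ('v \<Rightarrow> 'v \<Rightarrow> bool) \<Rightarrow> bool" where
  "connected_graph V adj \<longleftrightarrow>
     (\<forall>x\<in>V. \<forall>y\<in>V. \<exists>ps. is_path V adj ps \<and> hd ps = x \<and> last ps = y)"

definition has_cycle :: "'v set \<Rightarrow> ('v \<Rightarrow> 'v \<Rightarrow> bool) \<Rightarrow> bool" where
  "has_cycle V adj \<longleftrightarrow> (\<exists>ps. is_path V adj ps \<and> length ps \<ge> 3 \<and> adj (last ps) (hd ps))"

definition is_tree :: "'v set \<Rightarrow> ('v \<Rightarrow> 'v \<Rightarrow> bool) \<Rightarrow> bool" where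
  "is_tree V adj \<longleftrightarrow> V \<noteq> {} \<and> connected_graph V adj \<and> \<not> has_cycle V adj"

end

theory Submission
  imports Defs
begin

text \<open>
  An ideal generated by squarefree monomials \<open>u\<^sub>C\<close> of one degree is linearly presented iff
  any two generators \<open>C\<close>, \<open>D\<close> are joined by a path of the graph of generators that stays
  among the generators contained in \<open>C \<union> D\<close>. Given such paths, a syzygy splits into
  multihomogeneous components; each is a combination with coefficient sum zero of the vectors
  \<open>(t\<^sup>y / u\<^sub>C) e\<^sub>C\<close>, hence of pair syzygies, and a pair syzygy telescopes along the path into
  monomial multiples of linear syzygies. Conversely, let \<open>K\<close> be the set of generators reachable
  from \<open>C\<close> inside \<open>C \<union> D\<close>. In a fixed multidegree the support of a linear syzygy consists of
  pairwise adjacent generators, so it lies in \<open>K\<close> or misses \<open>K\<close>. Hence the coefficient of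
  \<open>t\<^bsup>C \<union> D\<^esup>\<close> in \<open>\<Sum>\<^sub>X\<^sub>\<in>\<^sub>K v\<^sub>X u\<^sub>X\<close> vanishes on the span of the linear syzygies, whereas
  it is 1 on the pair syzygy of \<open>C\<close> and \<open>D\<close> unless \<open>D \<in> K\<close>.

  In a tree a path is determined by its ends, so the criterion says that every path lies in the
  union of its end vertices. Adjacent covers of equal size differ by the exchange of one vertex,
  so appending a cover to a path shrinks the intersection by one vertex or not at all, and it
  shrinks exactly when the vertex given up lies on every earlier cover. This happens at every
  step of every path iff every path lies in the union of its ends, which is the counting
  condition of the theorem.
\<close>

definition set_exp :: "'a::finite set \<Rightarrow> ('a \<Rightarrow>\<^sub>0 nat)" where
  "set_exp X = Abs_poly_mapping (\<lambda>x. if x \<in> X then 1 else 0)"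

definition exp_le :: "('a \<Rightarrow>\<^sub>0 nat) \<Rightarrow> ('a \<Rightarrow>\<^sub>0 nat) \<Rightarrow> bool" where
  "exp_le m n \<longleftrightarrow> (\<forall>x. Poly_Mapping.lookup m x \<le> Poly_Mapping.lookup n x)"

lemma lookup_set_exp: "Poly_Mapping.lookup (set_exp X) x = (if x \<in> X then 1 else 0)"
  unfolding set_exp_def by (subst lookup_Abs_poly_mapping) auto

lemma mdeg_set_exp: "mdeg (set_exp X) = card X"
proof -
  have "Poly_Mapping.keys (set_exp X) = X"
    by (auto simp: in_keys_iff lookup_set_exp split: if_splits)
  then show ?thesis unfolding mdeg_def by (simp add: lookup_set_exp)
qed

lemma set_exp_diff: "Y \<subseteq> X \<Longrightarrow> set_exp X - set_exp Y = set_exp (X - Y)"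
  by (rule poly_mapping_eqI) (auto simp: lookup_minus lookup_set_exp)

lemma exp_le_set_exp: "exp_le (set_exp X) y \<longleftrightarrow> (\<forall>x\<in>X. 0 < Poly_Mapping.lookup y x)"
  unfolding exp_le_def lookup_set_exp by (auto split: if_splits)

lemma exp_le_set_exp_iff: "exp_le (set_exp X) (set_exp Y) \<longleftrightarrow> X \<subseteq> Y"
  unfolding exp_le_def lookup_set_exp by (auto split: if_splits)

lemma exp_le_set_exp_imp_eq:
  assumes "exp_le q (set_exp U)"
  obtains S where "S \<subseteq> U" "q = set_exp S"
proof
  have le1: "Poly_Mapping.lookup q x \<le> (if x \<in> U then 1 else 0)" for x
    using assms unfolding exp_le_def lookup_set_exp by blast
  then show "{x. 0 < Poly_Mapping.lookup q x} \<subseteq> U"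
    by (force split: if_splits)
  show "q = set_exp {x. 0 < Poly_Mapping.lookup q x}"
  proof (rule poly_mapping_eqI)
    fix x
    show "Poly_Mapping.lookup q x = Poly_Mapping.lookup (set_exp {x. 0 < Poly_Mapping.lookup q x}) x"
      using le1[of x] by (auto simp: lookup_set_exp split: if_splits)
  qed
qed

lemma eq_add_iff_exp_le: "y = l + m \<longleftrightarrow> exp_le m y \<and> l = y - m"
  for y l m :: "'a \<Rightarrow>\<^sub>0 nat"
  unfolding poly_mapping_eq_iff fun_eq_iff lookup_add lookup_minus exp_le_def
  by (metis add_diff_cancel_right' le_add2 le_add_diff_inverse2)

lemma diff_add_exp_le: "exp_le m y \<Longrightarrow> y - m + m = y"
  using eq_add_iff_exp_le by metis

lemma diff_add_diff_exp_le:
  assumes "exp_le m n" "exp_le n y"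
  shows "y - n + (n - m) = y - m"
proof (rule poly_mapping_eqI)
  fix x
  have "Poly_Mapping.lookup m x \<le> Poly_Mapping.lookup n x" "Poly_Mapping.lookup n x \<le> Poly_Mapping.lookup y x"
    using assms unfolding exp_le_def by auto
  then show "Poly_Mapping.lookup (y - n + (n - m)) x = Poly_Mapping.lookup (y - m) x"
    by (simp add: lookup_add lookup_minus)
qed

lemma cover_monomial_eq_single:
  "(cover_monomial C :: ('a::finite, 'k::comm_ring_1) mpoly) = Poly_Mapping.single (set_exp C) 1"
proof (induction C rule: finite_induct[OF finite])
  case 1
  have "set_exp {} = (0 :: 'a \<Rightarrow>\<^sub>0 nat)" by (rule poly_mapping_eqI) (simp add: lookup_set_exp)
  then show ?case by (simp add: cover_monomial_def)
next
  case (2 x C)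
  have "set_exp (insert x C) = Poly_Mapping.single x 1 + set_exp C"
    using 2 by (intro poly_mapping_eqI) (auto simp: lookup_add lookup_set_exp lookup_single when_def)
  with 2 show ?case by (simp add: cover_monomial_def Var_def mult_single)
qed

lemma lookup_mult_single:
  "Poly_Mapping.lookup (p * Poly_Mapping.single m a) y =
     (if exp_le m y then Poly_Mapping.lookup p (y - m) * a else 0)"
  for p :: "('a, 'k::comm_ring_1) mpoly"
proof -
  have "(\<Sum>q. (a when m = q) when y = l + q) = (a when y = l + m)" for l
    by (subst when_commute) (rule Sum_any_when_equal')
  then have "Poly_Mapping.lookup (p * Poly_Mapping.single m a) y =
      (\<Sum>l. Poly_Mapping.lookup p l * (a when y = l + m))"
    by (simp add: lookup_mult lookup_single)
  also have "\<dots> = (\<Sum>l. (if exp_le m y then Poly_Mapping.lookup p l * a else 0) when l = y - m)"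
    by (intro Sum_any.cong) (auto simp: when_def eq_add_iff_exp_le)
  finally show ?thesis by simp
qed

lemma lookup_mult_eq_0:
  assumes "\<And>q. exp_le q y \<Longrightarrow> Poly_Mapping.lookup p q = 0"
  shows "Poly_Mapping.lookup (c * p) y = 0"
proof -
  have "(Poly_Mapping.lookup p q when y = l + q) = 0" for l q
    using assms eq_add_iff_exp_le[of y l q] by (auto simp: when_def add.commute)
  then show ?thesis by (simp add: lookup_mult)
qed

lemma linear_form_single: "mdeg m = 1 \<Longrightarrow> linear_form (Poly_Mapping.single m c)"
  unfolding linear_form_def homogeneous_of_degree_def by simp

lemma module_span_base: "g \<in> L \<Longrightarrow> g \<in> module_span L"
  unfolding module_span_def by (intro CollectI exI[of _ "{g}"] exI[of _ "\<lambda>_. 1"]) simp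

lemma module_span_zero: "(\<lambda>i. 0) \<in> module_span L"
  unfolding module_span_def by auto

lemma module_span_mult:
  assumes "v \<in> module_span L"
  shows "(\<lambda>i. c * v i) \<in> module_span L"
proof -
  obtain F a where "finite F" "F \<subseteq> L" "v = (\<lambda>i. \<Sum>g\<in>F. a g * g i)"
    using assms unfolding module_span_def by blast
  then show ?thesis unfolding module_span_def
    by (intro CollectI exI[of _ F] exI[of _ "\<lambda>g. c * a g"])
      (simp add: sum_distrib_left mult.assoc)
qed

lemma module_span_add:
  assumes "v \<in> module_span L" "w \<in> module_span L"
  shows "(\<lambda>i. v i + w i) \<in> module_span L"
proof -
  obtain F a where F: "finite F" "F \<subseteq> L" "v = (\<lambda>i. \<Sum>g\<in>F. a g * g i)"
    using assms(1) unfolding module_span_def by blast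
  obtain G b where G: "finite G" "G \<subseteq> L" "w = (\<lambda>i. \<Sum>g\<in>G. b g * g i)"
    using assms(2) unfolding module_span_def by blast
  have extend: "(\<Sum>g\<in>H. c g * g i) = (\<Sum>g\<in>F \<union> G. (if g \<in> H then c g else 0) * g i)"
    if "H \<subseteq> F \<union> G" for H c i
    by (rule sum.mono_neutral_cong_left) (use that F(1) G(1) in auto)
  define c where "c g = (if g \<in> F then a g else 0) + (if g \<in> G then b g else 0)" for g
  have "(\<lambda>i. v i + w i) = (\<lambda>i. \<Sum>g\<in>F \<union> G. c g * g i)"
    unfolding F(3) G(3) c_def extend[of F a, OF Un_upper1] extend[of G b, OF Un_upper2]
    by (simp add: distrib_right sum.distrib)
  then show ?thesis
    unfolding module_span_def using F G by (intro CollectI exI[of _ "F \<union> G"] exI[of _ c]) auto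
qed

lemma module_span_sum:
  assumes "finite A" "\<And>a. a \<in> A \<Longrightarrow> f a \<in> module_span L"
  shows "(\<lambda>i. \<Sum>a\<in>A. f a i) \<in> module_span L"
  using assms by (induction A rule: finite_induct) (simp_all add: module_span_zero module_span_add)

lemma module_span_subset_syzygies:
  assumes "L \<subseteq> syzygies I u"
  shows "module_span L \<subseteq> syzygies I u"
proof
  fix v assume "v \<in> module_span L"
  then obtain F c where F: "finite F" "F \<subseteq> L" "v = (\<lambda>i. \<Sum>g\<in>F. c g * g i)"
    unfolding module_span_def by blast
  have vanish: "g i = 0" if "g \<in> F" "i \<notin> I" for g i
    using that F(2) assms unfolding syzygies_def by auto
  have outside: "v i = 0" if "i \<notin> I" for i
    unfolding F(3) by (intro sum.neutral ballI) (simp add: vanish that)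
  have "(\<Sum>i\<in>I. v i * u i) = (\<Sum>g\<in>F. c g * (\<Sum>i\<in>I. g i * u i))"
    unfolding F(3) by (simp add: sum_distrib_right sum_distrib_left mult.assoc sum.swap[of _ I])
  also have "\<dots> = 0"
    using F(2) assms unfolding syzygies_def by (auto intro!: sum.neutral)
  finally show "v \<in> syzygies I u"
    unfolding syzygies_def using outside by auto
qed

lemma combination_in_module_span_if_differences:
  assumes "finite A" "(\<Sum>a\<in>A. c a) = 0"
    and "\<And>a b. a \<in> A \<Longrightarrow> b \<in> A \<Longrightarrow> (\<lambda>i. f a i - f b i) \<in> module_span L"
  shows "(\<lambda>i. \<Sum>a\<in>A. c a * f a i) \<in> module_span L"
proof (cases "A = {}")
  case True
  then show ?thesis by (simp add: module_span_zero)
next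
  case False
  then obtain b where "b \<in> A" by blast
  have "(\<Sum>a\<in>A. c a * f a i) = (\<Sum>a\<in>A. c a * (f a i - f b i))" for i
    using assms(2) by (simp add: right_diff_distrib sum_subtractf flip: sum_distrib_right)
  moreover have "(\<lambda>i. \<Sum>a\<in>A. c a * (f a i - f b i)) \<in> module_span L"
    using assms(1,3) \<open>b \<in> A\<close> by (intro module_span_sum module_span_mult) auto
  ultimately show ?thesis by simp
qed

section \<open>Syzygies of cover monomials\<close>

text \<open>\<open>cofactor_vec y C\<close> is the vector \<open>(t\<^sup>y / u\<^sub>C) e\<^sub>C\<close> of \<open>S\<^sup>I\<close>. It is only meaningful when \<open>u\<^sub>C\<close>
  divides \<open>t\<^sup>y\<close>, since the subtraction of exponents truncates.\<close>

definition cofactor_vec :: "('a \<Rightarrow>\<^sub>0 nat) \<Rightarrow> 'a::finite set \<Rightarrow> 'a set \<Rightarrow> ('a, 'k::comm_ring_1) mpoly" where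
  "cofactor_vec y C X = (if X = C then Poly_Mapping.single (y - set_exp C) 1 else 0)"

definition pair_syzygy :: "('a \<Rightarrow>\<^sub>0 nat) \<Rightarrow> 'a::finite set \<Rightarrow> 'a set \<Rightarrow> 'a set \<Rightarrow> ('a, 'k::comm_ring_1) mpoly" where
  "pair_syzygy y C D = (\<lambda>X. cofactor_vec y C X - cofactor_vec y D X)"

abbreviation linear_syzygies :: "'a::finite set set \<Rightarrow> ('a set \<Rightarrow> ('a, 'k::comm_ring_1) mpoly) set" where
  "linear_syzygies I \<equiv> {v \<in> syzygies I (\<lambda>C. cover_monomial C). \<forall>X. linear_form (v X)}"

lemma cofactor_vec_mult_cover_monomial:
  "exp_le (set_exp C) y \<Longrightarrow>
     cofactor_vec y C X * cover_monomial X = (if X = C then Poly_Mapping.single y 1 else 0)"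
  by (simp add: cofactor_vec_def cover_monomial_eq_single mult_single diff_add_exp_le)

lemma pair_syzygy_in_syzygies:
  assumes "finite I" "C \<in> I" "D \<in> I" "exp_le (set_exp C) y" "exp_le (set_exp D) y"
  shows "pair_syzygy y C D \<in> syzygies I (\<lambda>C. cover_monomial C)"
proof -
  have "(\<Sum>X\<in>I. pair_syzygy y C D X * cover_monomial X) =
      (\<Sum>X\<in>I. if X = C then Poly_Mapping.single y 1 else 0) -
      (\<Sum>X\<in>I. if X = D then Poly_Mapping.single y 1 else 0)"
    using assms(4,5)
    by (simp add: pair_syzygy_def left_diff_distrib cofactor_vec_mult_cover_monomial sum_subtractf)
  also have "\<dots> = 0"
    using assms(1-3) by simp
  finally show ?thesis
    using assms(2,3) unfolding syzygies_def pair_syzygy_def cofactor_vec_def by auto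
qed

lemma pair_syzygy_shift:
  assumes "exp_le (set_exp C) M" "exp_le (set_exp D) M" "exp_le M y"
  shows "pair_syzygy y C D = (\<lambda>X. Poly_Mapping.single (y - M) 1 * pair_syzygy M C D X)"
  using assms
  by (auto simp: fun_eq_iff pair_syzygy_def cofactor_vec_def mult_single diff_add_diff_exp_le
      right_diff_distrib)

lemma card_diff_eq_1_if_cover_adj:
  fixes C D :: "'a::finite set"
  assumes "cover_adj C D" "card C = card D"
  shows "card (D - C) = 1" "card (C - D) = 1"
proof -
  have "card (C \<union> D) = card C + card (D - C)" "card (C \<union> D) = card D + card (C - D)"
    by (simp_all add: card_Un_disjoint[symmetric] Un_Diff_cancel Un_Diff_cancel2 Un_commute)
  then show "card (D - C) = 1" "card (C - D) = 1"
    using assms unfolding cover_adj_def by simp_all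
qed

lemma pair_syzygy_linear_if_cover_adj:
  assumes "finite I" "C \<in> I" "D \<in> I" "cover_adj C D" "card C = card D"
  shows "pair_syzygy (set_exp (C \<union> D)) C D \<in> (linear_syzygies I :: ('a::finite set \<Rightarrow> ('a, 'k::comm_ring_1) mpoly) set)"
proof -
  have "C \<noteq> D" using assms(4) unfolding cover_adj_def by simp
  have "set_exp (C \<union> D) - set_exp C = set_exp (D - C)" "set_exp (C \<union> D) - set_exp D = set_exp (C - D)"
    by (simp_all add: set_exp_diff Un_Diff)
  moreover have "linear_form (0 :: ('a, 'k) mpoly)"
    unfolding linear_form_def homogeneous_of_degree_def by simp
  ultimately have "linear_form (pair_syzygy (set_exp (C \<union> D)) C D X :: ('a, 'k) mpoly)" for X
    using \<open>C \<noteq> D\<close> card_diff_eq_1_if_cover_adj[OF assms(4,5)]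
    by (auto simp: pair_syzygy_def cofactor_vec_def mdeg_set_exp linear_form_single
        simp flip: single_uminus)
  moreover have "pair_syzygy (set_exp (C \<union> D)) C D \<in> syzygies I (\<lambda>C. cover_monomial C :: ('a, 'k) mpoly)"
    using assms(1-3) by (intro pair_syzygy_in_syzygies) (auto simp: exp_le_set_exp_iff)
  ultimately show ?thesis by simp
qed

lemma vector_eq_sum_cofactor_vecs:
  fixes v :: "'a::finite set \<Rightarrow> ('a, 'k::comm_ring_1) mpoly"
  assumes "finite I" "\<And>X. X \<notin> I \<Longrightarrow> v X = 0"
  obtains Y where "finite Y"
    "v = (\<lambda>X. \<Sum>y\<in>Y. \<Sum>C\<in>{C \<in> I. exp_le (set_exp C) y}.
      Poly_Mapping.single 0 (Poly_Mapping.lookup (v C) (y - set_exp C)) * cofactor_vec y C X)"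
proof
  define Y where "Y = (\<Union>C\<in>I. (\<lambda>m. m + set_exp C) ` Poly_Mapping.keys (v C))"
  show "finite Y" using assms(1) by (simp add: Y_def)
  have component: "(\<Sum>C\<in>{C \<in> I. exp_le (set_exp C) y}.
      Poly_Mapping.single 0 (Poly_Mapping.lookup (v C) (y - set_exp C)) * cofactor_vec y C X) =
      (if X \<in> I \<and> exp_le (set_exp X) y
       then Poly_Mapping.single (y - set_exp X) (Poly_Mapping.lookup (v X) (y - set_exp X)) else 0)"
    for y X
    using assms(1) by (simp add: cofactor_vec_def mult_single if_distrib[of "\<lambda>p. _ * p"] cong: if_cong)
  show "v = (\<lambda>X. \<Sum>y\<in>Y. \<Sum>C\<in>{C \<in> I. exp_le (set_exp C) y}.
      Poly_Mapping.single 0 (Poly_Mapping.lookup (v C) (y - set_exp C)) * cofactor_vec y C X)"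
  proof (intro ext poly_mapping_eqI)
    fix X m
    have "(X \<in> I \<and> exp_le (set_exp X) y) \<and> y - set_exp X = m \<longleftrightarrow> y = m + set_exp X \<and> X \<in> I" for y
      using eq_add_iff_exp_le[of y m "set_exp X"] by auto
    then have "Poly_Mapping.lookup (\<Sum>y\<in>Y. \<Sum>C\<in>{C \<in> I. exp_le (set_exp C) y}.
        Poly_Mapping.single 0 (Poly_Mapping.lookup (v C) (y - set_exp C)) * cofactor_vec y C X) m =
        (\<Sum>y\<in>Y. if y = m + set_exp X then (if X \<in> I then Poly_Mapping.lookup (v X) m else 0) else 0)"
      unfolding component lookup_sum by (intro sum.cong) (auto simp: lookup_single when_def)
    also have "\<dots> = (if m + set_exp X \<in> Y \<and> X \<in> I then Poly_Mapping.lookup (v X) m else 0)"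
      using \<open>finite Y\<close> by (simp add: sum.delta)
    also have "\<dots> = Poly_Mapping.lookup (v X) m"
    proof -
      have "m + set_exp X \<in> Y" if "X \<in> I" "Poly_Mapping.lookup (v X) m \<noteq> 0"
        using that unfolding Y_def by (intro UN_I[of X] image_eqI[of _ _ m]) (auto simp: in_keys_iff)
      then show ?thesis by (cases "X \<in> I") (auto simp: assms(2))
    qed
    finally show "Poly_Mapping.lookup (v X) m = Poly_Mapping.lookup (\<Sum>y\<in>Y. \<Sum>C\<in>{C \<in> I. exp_le (set_exp C) y}.
        Poly_Mapping.single 0 (Poly_Mapping.lookup (v C) (y - set_exp C)) * cofactor_vec y C X) m"
      by simp
  qed
qed

lemma syzygy_coefficients_sum_eq_0:
  fixes v :: "'a::finite set \<Rightarrow> ('a, 'k::comm_ring_1) mpoly"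
  assumes "finite I" "v \<in> syzygies I (\<lambda>C. cover_monomial C)"
  shows "(\<Sum>C\<in>{C \<in> I. exp_le (set_exp C) y}. Poly_Mapping.lookup (v C) (y - set_exp C)) = 0"
proof -
  have "(\<Sum>C\<in>{C \<in> I. exp_le (set_exp C) y}. Poly_Mapping.lookup (v C) (y - set_exp C)) =
      Poly_Mapping.lookup (\<Sum>C\<in>I. v C * cover_monomial C) y"
    by (simp add: sum.inter_filter[OF assms(1)] lookup_sum cover_monomial_eq_single lookup_mult_single
        cong: if_cong)
  also have "\<dots> = 0"
    using assms(2) unfolding syzygies_def by simp
  finally show ?thesis .
qed

lemma syzygy_in_span_if_pair_syzygies:
  fixes v :: "'a::finite set \<Rightarrow> ('a, 'k::comm_ring_1) mpoly"
  assumes "finite I" "v \<in> syzygies I (\<lambda>C. cover_monomial C)"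
    and pair: "\<And>y C D. C \<in> I \<Longrightarrow> D \<in> I \<Longrightarrow> exp_le (set_exp C) y \<Longrightarrow> exp_le (set_exp D) y \<Longrightarrow>
      pair_syzygy y C D \<in> module_span L"
  shows "v \<in> module_span L"
proof -
  define coeff :: "('a \<Rightarrow>\<^sub>0 nat) \<Rightarrow> 'a set \<Rightarrow> ('a, 'k) mpoly"
    where "coeff y C = Poly_Mapping.single 0 (Poly_Mapping.lookup (v C) (y - set_exp C))" for y C
  have "v X = 0" if "X \<notin> I" for X
    using assms(2) that unfolding syzygies_def by auto
  then obtain Y where Y: "finite Y"
    "v = (\<lambda>X. \<Sum>y\<in>Y. \<Sum>C\<in>{C \<in> I. exp_le (set_exp C) y}. coeff y C * cofactor_vec y C X)"
    unfolding coeff_def using vector_eq_sum_cofactor_vecs[OF assms(1)] by blast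
  have "(\<Sum>C\<in>{C \<in> I. exp_le (set_exp C) y}. coeff y C) =
      Poly_Mapping.single 0 (\<Sum>C\<in>{C \<in> I. exp_le (set_exp C) y}. Poly_Mapping.lookup (v C) (y - set_exp C))"
    for y unfolding coeff_def
    by (rule sum_comp_morphism[where h = "Poly_Mapping.single 0", OF single_zero single_add, unfolded comp_def])
  then have "(\<Sum>C\<in>{C \<in> I. exp_le (set_exp C) y}. coeff y C) = 0" for y
    by (simp add: syzygy_coefficients_sum_eq_0[OF assms(1,2)])
  then have "(\<lambda>X. \<Sum>C\<in>{C \<in> I. exp_le (set_exp C) y}. coeff y C * cofactor_vec y C X) \<in> module_span L" for y
    using assms(1) pair unfolding pair_syzygy_def
    by (intro combination_in_module_span_if_differences) auto
  then show ?thesis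
    unfolding Y(2) by (rule module_span_sum[OF Y(1)])
qed

lemma linear_syzygy_support:
  fixes g :: "'a::finite set \<Rightarrow> ('a, 'k::comm_ring_1) mpoly"
  assumes "linear_form (g X)" "Poly_Mapping.lookup (g X * cover_monomial X) (set_exp S) \<noteq> 0"
  shows "X \<subseteq> S" "card S = Suc (card X)"
proof -
  have le: "exp_le (set_exp X) (set_exp S)"
    and coeff: "Poly_Mapping.lookup (g X) (set_exp S - set_exp X) \<noteq> 0"
    using assms(2) by (simp_all add: cover_monomial_eq_single lookup_mult_single split: if_splits)
  then show "X \<subseteq> S" by (simp add: exp_le_set_exp_iff)
  with coeff have "set_exp (S - X) \<in> Poly_Mapping.keys (g X)"
    by (simp add: set_exp_diff in_keys_iff)
  with assms(1) have "mdeg (set_exp (S - X)) = 1"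
    unfolding linear_form_def homogeneous_of_degree_def by blast
  then have "card (S - X) = 1" by (simp add: mdeg_set_exp)
  with \<open>X \<subseteq> S\<close> show "card S = Suc (card X)"
    by (simp add: card_Diff_subset)
qed

lemma cover_adj_if_subsets:
  fixes X Y S :: "'a::finite set"
  assumes "X \<subseteq> S" "Y \<subseteq> S" "card S = Suc (card X)" "card X = card Y" "X \<noteq> Y"
  shows "cover_adj X Y"
proof -
  have "\<not> Y \<subseteq> X"
    using card_subset_eq[OF finite _ assms(4)[symmetric]] assms(5) by blast
  then have "card X < card (X \<union> Y)"
    by (intro psubset_card_mono) auto
  moreover have "card (X \<union> Y) \<le> card S"
    using assms(1,2) by (intro card_mono) auto
  ultimately show ?thesis
    using assms(3,5) unfolding cover_adj_def by simp
qed

lemma linear_syzygy_support_adjacent: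
  fixes g :: "'a::finite set \<Rightarrow> ('a, 'k::comm_ring_1) mpoly"
  assumes "\<forall>C\<in>I. \<forall>D\<in>I. card C = card D" "g \<in> linear_syzygies I" "X \<in> I" "Y \<in> I" "X \<noteq> Y"
    and "Poly_Mapping.lookup (g X * cover_monomial X) (set_exp S) \<noteq> 0"
    and "Poly_Mapping.lookup (g Y * cover_monomial Y) (set_exp S) \<noteq> 0"
  shows "cover_adj X Y"
proof (rule cover_adj_if_subsets)
  show "X \<subseteq> S" "card S = Suc (card X)"
    using linear_syzygy_support[of g X S] assms(2,6) by simp_all
  show "Y \<subseteq> S"
    using linear_syzygy_support[of g Y S] assms(2,7) by simp
qed (use assms(1,3-5) in blast)+

lemma linear_syzygy_partial_coefficient_eq_0:
  fixes g :: "'a::finite set \<Rightarrow> ('a, 'k::comm_ring_1) mpoly"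
  assumes "finite I" "\<forall>C\<in>I. \<forall>D\<in>I. card C = card D" "g \<in> linear_syzygies I"
    and "K \<subseteq> {X \<in> I. X \<subseteq> U}"
    and closed: "\<And>X Y. X \<in> K \<Longrightarrow> Y \<in> I \<Longrightarrow> Y \<subseteq> U \<Longrightarrow> cover_adj X Y \<Longrightarrow> Y \<in> K"
    and "S \<subseteq> U"
  shows "Poly_Mapping.lookup (\<Sum>X\<in>K. g X * cover_monomial X) (set_exp S) = 0"
proof -
  define c where "c X = Poly_Mapping.lookup (g X * cover_monomial X) (set_exp S)" for X
  define N where "N = {X \<in> I. c X \<noteq> 0}"
  have "(\<Sum>X\<in>N. c X) = (\<Sum>X\<in>I. c X)"
    using assms(1) by (intro sum.mono_neutral_left) (auto simp: N_def)
  also have "\<dots> = Poly_Mapping.lookup (\<Sum>X\<in>I. g X * cover_monomial X) (set_exp S)"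
    by (simp add: c_def lookup_sum)
  also have "\<dots> = 0"
    using assms(3) unfolding syzygies_def by simp
  finally have sum_N: "(\<Sum>X\<in>N. c X) = 0" .
  have "finite K" by (rule finite_subset[OF assms(4)]) (simp add: assms(1))
  then have sum_K: "Poly_Mapping.lookup (\<Sum>X\<in>K. g X * cover_monomial X) (set_exp S) = (\<Sum>X\<in>K \<inter> N. c X)"
    using assms(4) by (auto simp: lookup_sum c_def N_def intro!: sum.mono_neutral_right)
  have "N \<subseteq> K \<or> K \<inter> N = {}"
  proof (rule disjCI)
    assume "K \<inter> N \<noteq> {}"
    then obtain X where X: "X \<in> K" "X \<in> N" by blast
    show "N \<subseteq> K"
    proof
      fix Y assume "Y \<in> N"
      then have "Y \<in> I" "Y \<subseteq> U"
        using assms(3,6) linear_syzygy_support(1)[of g Y S] unfolding N_def c_def by auto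
      moreover have "X = Y \<or> cover_adj X Y"
        using X(2) \<open>Y \<in> N\<close> linear_syzygy_support_adjacent[OF assms(2,3)]
        unfolding N_def c_def by blast
      ultimately show "Y \<in> K"
        using X(1) closed by blast
    qed
  qed
  then show ?thesis
    by (auto simp: sum_K sum_N Int_absorb1)
qed

lemma partial_coefficient_vanishes_on_linear_span:
  fixes v :: "'a::finite set \<Rightarrow> ('a, 'k::comm_ring_1) mpoly"
  assumes "finite I" "\<forall>C\<in>I. \<forall>D\<in>I. card C = card D" "v \<in> module_span (linear_syzygies I)"
    and "K \<subseteq> {X \<in> I. X \<subseteq> U}"
    and "\<And>X Y. X \<in> K \<Longrightarrow> Y \<in> I \<Longrightarrow> Y \<subseteq> U \<Longrightarrow> cover_adj X Y \<Longrightarrow> Y \<in> K"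
  shows "Poly_Mapping.lookup (\<Sum>X\<in>K. v X * cover_monomial X) (set_exp U) = 0"
proof -
  obtain F c where F: "finite F" "F \<subseteq> linear_syzygies I" "v = (\<lambda>X. \<Sum>g\<in>F. c g * g X)"
    using assms(3) unfolding module_span_def by blast
  have "(\<Sum>X\<in>K. v X * cover_monomial X) = (\<Sum>g\<in>F. c g * (\<Sum>X\<in>K. g X * cover_monomial X))"
    unfolding F(3) by (simp add: sum_distrib_left sum_distrib_right mult.assoc sum.swap[of _ K])
  moreover have "Poly_Mapping.lookup (c g * (\<Sum>X\<in>K. g X * cover_monomial X)) (set_exp U) = 0"
    if "g \<in> F" for g
  proof (rule lookup_mult_eq_0)
    fix q assume "exp_le q (set_exp U)"
    then obtain S where "S \<subseteq> U" "q = set_exp S" by (rule exp_le_set_exp_imp_eq)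
    then show "Poly_Mapping.lookup (\<Sum>X\<in>K. g X * cover_monomial X) q = 0"
      using that F(2) \<open>S \<subseteq> U\<close> unfolding \<open>q = set_exp S\<close>
      by (intro linear_syzygy_partial_coefficient_eq_0[OF assms(1,2) _ assms(4,5)]) auto
  qed
  ultimately show ?thesis by (simp add: lookup_sum)
qed

section \<open>Paths\<close>

lemma is_path_iff: "is_path V adj ps \<longleftrightarrow> ps \<noteq> [] \<and> distinct ps \<and> set ps \<subseteq> V \<and> successively adj ps"
  unfolding is_path_def successively_conv_nth by blast

lemma is_path_restrict_iff: "is_path {X \<in> V. P X} adj ps \<longleftrightarrow> is_path V adj ps \<and> (\<forall>X\<in>set ps. P X)"
  unfolding is_path_def by auto

lemma is_path_appendD1: "is_path V adj (xs @ ys) \<Longrightarrow> xs \<noteq> [] \<Longrightarrow> is_path V adj xs"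
  unfolding is_path_iff by (auto simp: successively_append_iff)

lemma is_path_appendD2: "is_path V adj (xs @ ys) \<Longrightarrow> ys \<noteq> [] \<Longrightarrow> is_path V adj ys"
  unfolding is_path_iff by (auto simp: successively_append_iff)

lemma is_path_snocD: "is_path V adj (xs @ [y]) \<Longrightarrow> xs \<noteq> [] \<Longrightarrow> adj (last xs) y"
  unfolding is_path_iff by (auto simp: successively_append_iff)

lemma is_path_extend:
  assumes "is_path V adj ps" "y \<in> V" "adj (last ps) y"
  obtains qs where "is_path V adj qs" "hd qs = hd ps" "last qs = y"
proof (cases "y \<in> set ps")
  case True
  then obtain xs zs where ps: "ps = xs @ y # zs" by (meson split_list)
  then have "is_path V adj (xs @ [y])"
    using assms(1) by (auto simp: is_path_iff successively_append_iff)
  moreover have "hd (xs @ [y]) = hd ps" using ps by (cases xs) auto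
  ultimately show ?thesis using that by simp
next
  case False
  then have "is_path V adj (ps @ [y])"
    using assms by (auto simp: is_path_iff successively_append_iff)
  moreover have "hd (ps @ [y]) = hd ps" using assms(1) by (simp add: is_path_def)
  ultimately show ?thesis using that by simp
qed

lemma has_cycle_if_two_branches:
  assumes adj_sym: "\<And>x y. x \<in> V \<Longrightarrow> y \<in> V \<Longrightarrow> adj x y \<Longrightarrow> adj y x"
    and p: "is_path V adj (a # p @ [z])" and q: "is_path V adj (a # q @ [z])"
    and "set p \<inter> set q = {}" "p \<noteq> [] \<or> q \<noteq> []"
  shows "has_cycle V adj"
proof -
  have q_succ: "successively adj (q @ [z])" and q_set: "set (q @ [z]) \<subseteq> V"
    using q by (auto simp: is_path_iff successively_Cons)
  have "successively (\<lambda>x y. adj y x) (q @ [z])"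
    by (rule successively_mono[OF q_succ]) (use q_set adj_sym in blast)
  then have q_rev: "successively adj (z # rev q)"
    using successively_rev[of adj "q @ [z]"] by simp
  have "successively adj ((a # p) @ [z])"
    using p by (simp add: is_path_iff)
  then have "successively adj ((a # p) @ z # rev q)"
    using q_rev by (simp only: successively_append_iff) auto
  moreover have "adj (last ((a # p) @ z # rev q)) a"
  proof -
    have "adj a (hd (q @ [z]))" "a \<in> V"
      using q by (auto simp: is_path_iff successively_Cons)
    moreover have "hd (q @ [z]) \<in> V"
      using q_set by (cases q) auto
    ultimately show ?thesis using adj_sym by (cases q) (auto simp: last_rev)
  qed
  moreover have "distinct ((a # p) @ z # rev q)" "set ((a # p) @ z # rev q) \<subseteq> V"
    using p q \<open>set p \<inter> set q = {}\<close> by (auto simp: is_path_iff)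
  moreover have "3 \<le> length ((a # p) @ z # rev q)"
    using \<open>p \<noteq> [] \<or> q \<noteq> []\<close> by (cases p; cases q) auto
  ultimately show ?thesis
    unfolding has_cycle_def is_path_iff by (intro exI[of _ "(a # p) @ z # rev q"]) simp
qed

lemma has_cycle_if_diverging_paths:
  assumes adj_sym: "\<And>x y. x \<in> V \<Longrightarrow> y \<in> V \<Longrightarrow> adj x y \<Longrightarrow> adj y x"
    and "is_path V adj (a # p)" "is_path V adj (a # q)"
    and "p \<noteq> []" "q \<noteq> []" "last p = last q" "hd p \<noteq> hd q"
  shows "has_cycle V adj"
proof -
  \<comment> \<open>Following \<open>q\<close> up to its first vertex \<open>z\<close> on \<open>p\<close> closes a cycle through \<open>a\<close>.\<close>
  have "\<exists>x\<in>set q. x \<in> set p"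
    using assms(4-6) by (metis last_in_set)
  then obtain q1 z q2 where q: "q = q1 @ z # q2" "z \<in> set p" "\<forall>x\<in>set q1. x \<notin> set p"
    using split_list_first_prop[of q "\<lambda>x. x \<in> set p"] by blast
  obtain p1 p2 where p: "p = p1 @ z # p2"
    using q(2) by (meson split_list)
  have "is_path V adj (a # p1 @ [z])"
    using assms(2) p is_path_appendD1[of V adj "a # p1 @ [z]" p2] by simp
  moreover have "is_path V adj (a # q1 @ [z])"
    using assms(3) q is_path_appendD1[of V adj "a # q1 @ [z]" q2] by simp
  moreover have "set p1 \<inter> set q1 = {}" using p q(3) by auto
  moreover have "p1 \<noteq> [] \<or> q1 \<noteq> []" using assms(7) p q(1) by auto
  ultimately show ?thesis
    using has_cycle_if_two_branches[of V adj a p1 z q1] adj_sym by blast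
qed

lemma path_unique_if_acyclic:
  assumes adj_sym: "\<And>x y. x \<in> V \<Longrightarrow> y \<in> V \<Longrightarrow> adj x y \<Longrightarrow> adj y x"
    and acyclic: "\<not> has_cycle V adj"
  shows "is_path V adj p \<Longrightarrow> is_path V adj q \<Longrightarrow> hd p = hd q \<Longrightarrow> last p = last q \<Longrightarrow> p = q"
proof (induction p arbitrary: q)
  case Nil
  then show ?case by (simp add: is_path_def)
next
  case (Cons a p)
  then obtain q' where q: "q = a # q'" by (cases q) (auto simp: is_path_def)
  show ?case
  proof (cases "p = [] \<or> q' = []")
    case True
    then show ?thesis
      using Cons.prems(1,2,4) q by (auto simp: is_path_iff last_in_set split: if_splits)
  next
    case False
    have paths: "is_path V adj p" "is_path V adj q'"
      using is_path_appendD2[of V adj "[a]" p] is_path_appendD2[of V adj "[a]" q'] Cons.prems(1,2) False q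
      by simp_all
    have "last p = last q'" using Cons.prems(4) False q by simp
    moreover have "hd p = hd q'"
    proof (rule ccontr)
      assume "hd p \<noteq> hd q'"
      then have "has_cycle V adj"
        using Cons.prems(1,2) False \<open>last p = last q'\<close> unfolding q
        by (intro has_cycle_if_diverging_paths[OF adj_sym]) auto
      with acyclic show False ..
    qed
    ultimately show ?thesis using Cons.IH[OF paths] q by simp
  qed
qed

lemma paths_within_union_iff_between_ends:
  fixes V :: "'a set set"
  assumes adj_sym: "\<And>X Y. X \<in> V \<Longrightarrow> Y \<in> V \<Longrightarrow> adj X Y \<Longrightarrow> adj Y X"
    and tree: "is_tree V adj"
  shows "(\<forall>C\<in>V. \<forall>D\<in>V. \<exists>ps. is_path {X \<in> V. X \<subseteq> C \<union> D} adj ps \<and> hd ps = C \<and> last ps = D) \<longleftrightarrow>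
    (\<forall>ps. is_path V adj ps \<longrightarrow> (\<forall>X\<in>set ps. X \<subseteq> hd ps \<union> last ps))"
proof (intro iffI allI impI)
  fix ps assume within: "\<forall>C\<in>V. \<forall>D\<in>V. \<exists>ps. is_path {X \<in> V. X \<subseteq> C \<union> D} adj ps \<and> hd ps = C \<and> last ps = D"
    and ps: "is_path V adj ps"
  then have "hd ps \<in> V" "last ps \<in> V" unfolding is_path_def by auto
  then obtain qs where "is_path {X \<in> V. X \<subseteq> hd ps \<union> last ps} adj qs" "hd qs = hd ps" "last qs = last ps"
    using within by blast
  then have qs: "is_path V adj qs" "\<forall>X\<in>set qs. X \<subseteq> hd ps \<union> last ps" "hd qs = hd ps" "last qs = last ps"
    unfolding is_path_restrict_iff by auto
  have "qs = ps"
    using tree qs ps unfolding is_tree_def by (intro path_unique_if_acyclic[OF adj_sym]) auto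
  then show "\<forall>X\<in>set ps. X \<subseteq> hd ps \<union> last ps" using qs(2) by simp
next
  assume between: "\<forall>ps. is_path V adj ps \<longrightarrow> (\<forall>X\<in>set ps. X \<subseteq> hd ps \<union> last ps)"
  show "\<forall>C\<in>V. \<forall>D\<in>V. \<exists>ps. is_path {X \<in> V. X \<subseteq> C \<union> D} adj ps \<and> hd ps = C \<and> last ps = D"
  proof (intro ballI)
    fix C D assume "C \<in> V" "D \<in> V"
    then obtain ps where ps: "is_path V adj ps" "hd ps = C" "last ps = D"
      using tree unfolding is_tree_def connected_graph_def by blast
    then have "is_path {X \<in> V. X \<subseteq> C \<union> D} adj ps"
      using between unfolding is_path_restrict_iff by auto
    with ps show "\<exists>ps. is_path {X \<in> V. X \<subseteq> C \<union> D} adj ps \<and> hd ps = C \<and> last ps = D"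
      by blast
  qed
qed

lemma pair_syzygy_in_span_if_chain:
  fixes I :: "'a::finite set set"
  assumes "finite I" "\<forall>C\<in>I. \<forall>D\<in>I. card C = card D"
  shows "successively cover_adj ps \<Longrightarrow> ps \<noteq> [] \<Longrightarrow> set ps \<subseteq> I \<Longrightarrow>
    \<forall>X\<in>set ps. exp_le (set_exp X) y \<Longrightarrow>
    (pair_syzygy y (hd ps) (last ps) :: 'a set \<Rightarrow> ('a, 'k::comm_ring_1) mpoly)
      \<in> module_span (linear_syzygies I)"
proof (induction ps)
  case Nil
  then show ?case by simp
next
  case (Cons C ps)
  show ?case
  proof (cases "ps = []")
    case True
    then show ?thesis by (simp add: pair_syzygy_def module_span_zero)
  next
    case False
    define D where "D = hd ps"
    have "D \<in> set ps" using False by (simp add: D_def)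
    have adj: "cover_adj C D" using Cons.prems(1) False by (simp add: successively_Cons D_def)
    have CD: "C \<in> I" "D \<in> I" "exp_le (set_exp C) y" "exp_le (set_exp D) y"
      using Cons.prems \<open>D \<in> set ps\<close> by auto
    have shift: "(pair_syzygy y C D :: 'a set \<Rightarrow> ('a, 'k) mpoly) =
        (\<lambda>X. Poly_Mapping.single (y - set_exp (C \<union> D)) 1 * pair_syzygy (set_exp (C \<union> D)) C D X)"
    proof (rule pair_syzygy_shift)
      show "exp_le (set_exp (C \<union> D)) y" using CD(3,4) by (auto simp: exp_le_set_exp)
    qed (simp_all add: exp_le_set_exp_iff)
    have "pair_syzygy (set_exp (C \<union> D)) C D \<in> (linear_syzygies I :: ('a set \<Rightarrow> ('a, 'k) mpoly) set)"
      using assms(2) CD(1,2) by (intro pair_syzygy_linear_if_cover_adj[OF assms(1) CD(1,2) adj]) blast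
    then have step: "(pair_syzygy y C D :: 'a set \<Rightarrow> ('a, 'k) mpoly) \<in> module_span (linear_syzygies I)"
      unfolding shift by (intro module_span_mult module_span_base)
    have rest: "(pair_syzygy y D (last ps) :: 'a set \<Rightarrow> ('a, 'k) mpoly) \<in> module_span (linear_syzygies I)"
      using Cons.IH Cons.prems False by (simp add: successively_Cons D_def)
    have "(pair_syzygy y C (last ps) :: 'a set \<Rightarrow> ('a, 'k) mpoly) =
        (\<lambda>X. pair_syzygy y C D X + pair_syzygy y D (last ps) X)"
      by (simp add: pair_syzygy_def)
    then show ?thesis using module_span_add[OF step rest] False by simp
  qed
qed

lemma path_within_union_if_linear_syzygies_span:
  fixes I :: "'a::finite set set"
  assumes "finite I" "\<forall>C\<in>I. \<forall>D\<in>I. card C = card D"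
    and span: "syzygies I (\<lambda>C. cover_monomial C :: ('a, 'k::comm_ring_1) mpoly) \<subseteq> module_span (linear_syzygies I)"
    and "C \<in> I" "D \<in> I"
  shows "\<exists>ps. is_path {X \<in> I. X \<subseteq> C \<union> D} cover_adj ps \<and> hd ps = C \<and> last ps = D"
proof (rule ccontr)
  assume no_path: "\<not> ?thesis"
  define A where "A = {X \<in> I. X \<subseteq> C \<union> D}"
  define K where "K = {X. \<exists>ps. is_path A cover_adj ps \<and> hd ps = C \<and> last ps = X}"
  have "K \<subseteq> A"
  proof
    fix X assume "X \<in> K"
    then obtain ps where "is_path A cover_adj ps" "last ps = X"
      unfolding K_def by blast
    then show "X \<in> A" unfolding is_path_def by auto
  qed
  have "C \<in> K"
    using assms(4) unfolding K_def A_def by (intro CollectI exI[of _ "[C]"]) (simp add: is_path_def)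
  have "D \<notin> K"
    using no_path unfolding K_def A_def by blast
  have closed: "Y \<in> K" if "X \<in> K" "Y \<in> I" "Y \<subseteq> C \<union> D" "cover_adj X Y" for X Y
  proof -
    obtain ps where ps: "is_path A cover_adj ps" "hd ps = C" "last ps = X"
      using \<open>X \<in> K\<close> unfolding K_def by blast
    have "Y \<in> A" using that(2,3) unfolding A_def by simp
    with ps that(4) obtain qs where "is_path A cover_adj qs" "hd qs = C" "last qs = Y"
      by (metis is_path_extend)
    then show ?thesis unfolding K_def by blast
  qed
  \<comment> \<open>The coefficient of \<open>t\<^bsup>C \<union> D\<^esup>\<close> in \<open>\<Sum>\<^sub>X\<^sub>\<in>\<^sub>K \<sigma>\<^sub>X u\<^sub>X\<close> separates \<open>\<sigma>\<close> from the linear span.\<close>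
  define \<sigma> where "\<sigma> = (pair_syzygy (set_exp (C \<union> D)) C D :: 'a set \<Rightarrow> ('a, 'k) mpoly)"
  have "\<sigma> \<in> syzygies I (\<lambda>C. cover_monomial C)"
    unfolding \<sigma>_def by (rule pair_syzygy_in_syzygies) (simp_all add: assms(1,4,5) exp_le_set_exp_iff)
  with span have "\<sigma> \<in> module_span (linear_syzygies I)" by (rule subsetD)
  then have "Poly_Mapping.lookup (\<Sum>X\<in>K. \<sigma> X * cover_monomial X) (set_exp (C \<union> D)) = 0"
    using \<open>K \<subseteq> A\<close> closed unfolding A_def
    by (rule partial_coefficient_vanishes_on_linear_span[OF assms(1,2)])
  moreover have "\<sigma> X * cover_monomial X =
      (if X = C then Poly_Mapping.single (set_exp (C \<union> D)) 1 else 0) -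
      (if X = D then Poly_Mapping.single (set_exp (C \<union> D)) 1 else 0)" for X
    unfolding \<sigma>_def pair_syzygy_def left_diff_distrib
    by (simp add: cofactor_vec_mult_cover_monomial exp_le_set_exp_iff)
  moreover have "finite K"
    using \<open>K \<subseteq> A\<close> assms(1) unfolding A_def by (simp add: finite_subset)
  ultimately show False
    using \<open>C \<in> K\<close> \<open>D \<notin> K\<close> by (simp add: lookup_sum lookup_minus sum_subtractf)
qed

theorem linear_syzygies_span_iff_paths_within_union:
  fixes I :: "'a::finite set set"
  assumes "finite I" "\<forall>C\<in>I. \<forall>D\<in>I. card C = card D"
  shows "syzygies I (\<lambda>C. cover_monomial C :: ('a, 'k::comm_ring_1) mpoly) \<subseteq> module_span (linear_syzygies I) \<longleftrightarrow>
    (\<forall>C\<in>I. \<forall>D\<in>I. \<exists>ps. is_path {X \<in> I. X \<subseteq> C \<union> D} cover_adj ps \<and> hd ps = C \<and> last ps = D)"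
proof (intro iffI ballI subsetI)
  fix C D
  assume "syzygies I (\<lambda>C. cover_monomial C :: ('a, 'k) mpoly) \<subseteq> module_span (linear_syzygies I)"
    and "C \<in> I" "D \<in> I"
  then show "\<exists>ps. is_path {X \<in> I. X \<subseteq> C \<union> D} cover_adj ps \<and> hd ps = C \<and> last ps = D"
    by (rule path_within_union_if_linear_syzygies_span[OF assms])
next
  fix v :: "'a set \<Rightarrow> ('a, 'k) mpoly"
  assume paths: "\<forall>C\<in>I. \<forall>D\<in>I. \<exists>ps. is_path {X \<in> I. X \<subseteq> C \<union> D} cover_adj ps \<and> hd ps = C \<and> last ps = D"
    and v: "v \<in> syzygies I (\<lambda>C. cover_monomial C)"
  show "v \<in> module_span (linear_syzygies I)"
  proof (rule syzygy_in_span_if_pair_syzygies[OF assms(1) v])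
    fix y C D assume "C \<in> I" "D \<in> I" "exp_le (set_exp C) y" "exp_le (set_exp D) y"
    obtain ps where ps: "is_path {X \<in> I. X \<subseteq> C \<union> D} cover_adj ps" "hd ps = C" "last ps = D"
      using paths \<open>C \<in> I\<close> \<open>D \<in> I\<close> by blast
    then have "successively cover_adj ps" "ps \<noteq> []" "set ps \<subseteq> I" "\<forall>X\<in>set ps. X \<subseteq> C \<union> D"
      by (auto simp: is_path_iff)
    moreover from this(4) have "\<forall>X\<in>set ps. exp_le (set_exp X) y"
      using \<open>exp_le (set_exp C) y\<close> \<open>exp_le (set_exp D) y\<close> by (auto simp: exp_le_set_exp)
    ultimately have "pair_syzygy y (hd ps) (last ps) \<in> module_span (linear_syzygies I)"
      by (intro pair_syzygy_in_span_if_chain[OF assms])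
    with ps(2,3) show "pair_syzygy y C D \<in> module_span (linear_syzygies I)" by simp
  qed
qed

lemma linearly_presented_cover_monomials_iff:
  fixes I :: "'a::finite set set"
  assumes "\<forall>C\<in>I. card C = d"
  shows "linearly_presented I (\<lambda>C. cover_monomial C :: ('a, 'k::comm_ring_1) mpoly) \<longleftrightarrow>
    syzygies I (\<lambda>C. cover_monomial C :: ('a, 'k) mpoly) \<subseteq> module_span (linear_syzygies I)"
proof -
  have "\<forall>C\<in>I. homogeneous_of_degree d (cover_monomial C :: ('a, 'k) mpoly)"
    using assms by (simp add: homogeneous_of_degree_def cover_monomial_eq_single mdeg_set_exp)
  moreover have "module_span (linear_syzygies I) \<subseteq> syzygies I (\<lambda>C. cover_monomial C :: ('a, 'k) mpoly)"
    by (rule module_span_subset_syzygies) auto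
  ultimately show ?thesis
    unfolding linearly_presented_def by auto
qed

section \<open>Intersections along paths\<close>

lemma path_snoc_exchange:
  fixes V :: "'a::finite set set"
  assumes "\<forall>X\<in>V. card X = \<alpha>" "is_path V cover_adj (ps @ [Z])" "ps \<noteq> []"
  obtains x where "is_path V cover_adj ps" "last ps - Z = {x}"
proof -
  have "last ps \<in> V" "Z \<in> V"
    using assms(2) last_in_set[OF assms(3)] unfolding is_path_def by auto
  then have "card (last ps - Z) = 1"
    using assms(1) card_diff_eq_1_if_cover_adj(2)[OF is_path_snocD[OF assms(2,3)]] by simp
  then show ?thesis
    using that is_path_appendD1[OF assms(2,3)] by (meson card_1_singletonE)
qed

definition linear_intersection :: "nat \<Rightarrow> 'a set list \<Rightarrow> bool" where
  "linear_intersection \<alpha> ps \<longleftrightarrow> \<alpha> \<ge> length ps - 1 \<and> card (\<Inter>(set ps)) = \<alpha> - (length ps - 1)"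

lemma linear_intersection_snoc_iff:
  fixes ps :: "'a::finite set list"
  assumes "linear_intersection \<alpha> ps" "ps \<noteq> []" "last ps - Z = {x}"
  shows "linear_intersection \<alpha> (ps @ [Z]) \<longleftrightarrow> x \<in> \<Inter>(set ps)"
proof -
  have Inter: "\<Inter>(set (ps @ [Z])) = \<Inter>(set ps) - {x}"
    using assms(3) last_in_set[OF assms(2)] by auto
  have len: "length (ps @ [Z]) - 1 = Suc (length ps - 1)"
    using assms(2) by simp
  show ?thesis
  proof (cases "x \<in> \<Inter>(set ps)")
    case True
    then have "card (\<Inter>(set ps)) > 0" by (auto simp: card_gt_0_iff)
    with True show ?thesis
      using assms(1) unfolding linear_intersection_def Inter len by (simp add: card_Diff_singleton)
  next
    case False
    have "\<not> (Suc n \<le> \<alpha> \<and> \<alpha> - n = \<alpha> - Suc n)" for n :: nat by arith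
    with False show ?thesis
      using assms(1) unfolding linear_intersection_def Inter len by auto
  qed
qed

lemma linear_intersection_if_between_ends:
  fixes V :: "'a::finite set set"
  assumes card: "\<forall>X\<in>V. card X = \<alpha>"
    and between: "\<And>ps. is_path V cover_adj ps \<Longrightarrow> \<forall>X\<in>set ps. X \<subseteq> hd ps \<union> last ps"
  shows "is_path V cover_adj ps \<Longrightarrow> linear_intersection \<alpha> ps"
proof (induction ps rule: rev_induct)
  case Nil
  then show ?case by (simp add: is_path_def)
next
  case (snoc Z ps)
  show ?case
  proof (cases "ps = []")
    case True
    then show ?thesis using snoc.prems card by (simp add: is_path_def linear_intersection_def)
  next
    case False
    obtain x where ps: "is_path V cover_adj ps" and x: "last ps - Z = {x}"
      using path_snoc_exchange[OF card snoc.prems False] .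
    have "x \<in> X" if "X \<in> set ps" for X
    proof -
      obtain us ws where "ps = us @ X # ws" using \<open>X \<in> set ps\<close> by (meson split_list)
      with snoc.prems have "is_path V cover_adj (X # ws @ [Z])"
        using is_path_appendD2[of V cover_adj us "X # ws @ [Z]"] by simp
      moreover have "last ps \<in> set (X # ws @ [Z])"
        using \<open>ps = us @ X # ws\<close> by (cases ws rule: rev_cases) auto
      ultimately have "last ps \<subseteq> X \<union> Z"
        using between by fastforce
      then show ?thesis using x by auto
    qed
    then show ?thesis
      using linear_intersection_snoc_iff[OF snoc.IH[OF ps] False x] by blast
  qed
qed

lemma between_ends_if_linear_intersection:
  fixes V :: "'a::finite set set"
  assumes card: "\<forall>X\<in>V. card X = \<alpha>"
    and linear: "\<And>ps. is_path V cover_adj ps \<Longrightarrow> linear_intersection \<alpha> ps"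
  shows "is_path V cover_adj ps \<Longrightarrow> \<forall>X\<in>set ps. X \<subseteq> hd ps \<union> last ps"
proof (induction ps rule: rev_induct)
  case Nil
  then show ?case by (simp add: is_path_def)
next
  case (snoc Z ps)
  show ?case
  proof (cases "ps = []")
    case True
    then show ?thesis by simp
  next
    case False
    obtain x where ps: "is_path V cover_adj ps" and x: "last ps - Z = {x}"
      using path_snoc_exchange[OF card snoc.prems False] .
    have "x \<in> \<Inter>(set ps)"
      using linear_intersection_snoc_iff[OF linear[OF ps] False x] linear[OF snoc.prems] by blast
    then have "last ps \<subseteq> hd ps \<union> Z"
      using x hd_in_set[OF False] by auto
    then show ?thesis
      using snoc.IH[OF ps] False by auto
  qed
qed

lemma between_ends_iff_linear_intersection:
  fixes V :: "'a::finite set set"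
  assumes "\<forall>X\<in>V. card X = \<alpha>"
  shows "(\<forall>ps. is_path V cover_adj ps \<longrightarrow> (\<forall>X\<in>set ps. X \<subseteq> hd ps \<union> last ps)) \<longleftrightarrow>
    (\<forall>ps. is_path V cover_adj ps \<longrightarrow> linear_intersection \<alpha> ps)"
  using linear_intersection_if_between_ends[OF assms] between_ends_if_linear_intersection[OF assms]
  by blast

lemma exists_min_cover_subset:
  fixes C :: "'a::finite set"
  assumes "vertex_cover E C"
  obtains D where "D \<subseteq> C" "D \<in> min_covers E"
  using assms
proof (induction "card C" arbitrary: C rule: less_induct)
  case less
  show ?case
  proof (cases "C \<in> min_covers E")
    case True
    then show ?thesis using less.prems(1) by blast
  next
    case False
    then obtain D where "D \<subset> C" "vertex_cover E D"
      using less.prems(2) unfolding min_covers_def by blast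
    moreover have "card D < card C"
      using \<open>D \<subset> C\<close> by (simp add: psubset_card_mono)
    ultimately show ?thesis
      using less.hyps less.prems(1) by (meson order.trans psubset_imp_subset)
  qed
qed

lemma alpha0_eq_card_if_unmixed:
  fixes E :: "'a::finite set set"
  assumes "unmixed E" "C \<in> min_covers E"
  shows "alpha0 E = card C"
  unfolding alpha0_def
proof (rule Min_eqI)
  show "card C \<in> card ` {C. vertex_cover E C}"
    using assms(2) unfolding min_covers_def by auto
next
  fix k assume "k \<in> card ` {C. vertex_cover E C}"
  then obtain D where "vertex_cover E D" "k = card D" by auto
  moreover obtain D' where "D' \<subseteq> D" "D' \<in> min_covers E"
    using exists_min_cover_subset[OF \<open>vertex_cover E D\<close>] .
  ultimately show "card C \<le> k"
    using assms unfolding unmixed_def by (metis card_mono finite)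
qed simp

lemma cover_adj_sym: "card C = card D \<Longrightarrow> cover_adj C D \<Longrightarrow> cover_adj D C"
  unfolding cover_adj_def by (auto simp: Un_commute)

theorem corollary4p7:
  fixes E :: "'a::finite set set"
  assumes "simple_graph E"
    and "unmixed E"
    and "is_tree (min_covers E) cover_adj"
  shows "linearly_presented (min_covers E)
           (\<lambda>C. cover_monomial C :: ('a, 'k::field) mpoly)
         \<longleftrightarrow> (\<forall>ps. is_path (min_covers E) cover_adj ps \<longrightarrow>
                alpha0 E \<ge> length ps - 1 \<and>
                card (\<Inter>(set ps)) = alpha0 E - (length ps - 1))"
proof -
  have card: "\<forall>C\<in>min_covers E. card C = alpha0 E"
    using alpha0_eq_card_if_unmixed[OF assms(2)] by metis
  then have equal: "\<forall>C\<in>min_covers E. \<forall>D\<in>min_covers E. card C = card D" by simp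
  have sym: "cover_adj D C" if "C \<in> min_covers E" "D \<in> min_covers E" "cover_adj C D" for C D
    using cover_adj_sym[OF _ that(3)] equal that(1,2) by blast
  have "linearly_presented (min_covers E) (\<lambda>C. cover_monomial C :: ('a, 'k) mpoly) \<longleftrightarrow>
      syzygies (min_covers E) (\<lambda>C. cover_monomial C :: ('a, 'k) mpoly)
        \<subseteq> module_span (linear_syzygies (min_covers E))"
    by (rule linearly_presented_cover_monomials_iff[OF card])
  also have "\<dots> \<longleftrightarrow> (\<forall>C\<in>min_covers E. \<forall>D\<in>min_covers E.
      \<exists>ps. is_path {X \<in> min_covers E. X \<subseteq> C \<union> D} cover_adj ps \<and> hd ps = C \<and> last ps = D)"
    by (rule linear_syzygies_span_iff_paths_within_union[OF finite equal])
  also have "\<dots> \<longleftrightarrow> (\<forall>ps. is_path (min_covers E) cover_adj ps \<longrightarrow> (\<forall>X\<in>set ps. X \<subseteq> hd ps \<union> last ps))"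
    by (rule paths_within_union_iff_between_ends[OF sym assms(3)])
  also have "\<dots> \<longleftrightarrow> (\<forall>ps. is_path (min_covers E) cover_adj ps \<longrightarrow> linear_intersection (alpha0 E) ps)"
    by (rule between_ends_iff_linear_intersection[OF card])
  finally show ?thesis
    unfolding linear_intersection_def .
qed

end
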